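(* Let $X,Y\in M_n(\mathbb{C})$ be such that $[X,Y]=XY-YX$ is diagonal but nonzero. Consider the $n\times 2n$ matrix whose first $n$ columns are the diagonals of $X^0,X^1,\dots,X^{n-1}$ and whose last $n$ columns are the diagonals of $Y^0,Y^1,\dots,Y^{n-1}$. Then this matrix has rank at most $n-1$; in particular all of its $n\times n$ minors vanish.
   Context: For a matrix $Z\in M_n(\mathbb{C})$, its diagonal is the column vector $(Z_{11},\dots,Z_{nn})^T$; $X^0=Y^0=I$. *)

theory Defs
  imports "Jordan_Normal_Form.DL_Rank" "Jordan_Normal_Form.DL_Submatrix"
begin

definition diag_powers_mat :: "nat \<Rightarrow> complex mat \<Rightarrow> complex mat \<Rightarrow> complex mat" where
  "diag_powers_mat n X Y = mat n (2 * n) (\<lambda>(i, j).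
      if j < n then (X ^\<^sub>m j) $$ (i, i) else (Y ^\<^sub>m (j - n)) $$ (i, i))"

end

theory Submission
  imports Defs
begin

text \<open>Let \<open>D = XY - YX\<close> and let \<open>d\<close> be its diagonal. Every power \<open>P\<close> of \<open>X\<close> or of \<open>Y\<close>
  commutes with \<open>X\<close> or with \<open>Y\<close>, so \<open>DP\<close> is a commutator and
  \<open>0 = tr (DP) = \<Sum>\<^sub>i d\<^sub>i P\<^sub>i\<^sub>i\<close>, since \<open>D\<close> is diagonal. Hence the nonzero vector \<open>d\<close> is
  orthogonal (for the bilinear form \<open>\<bullet>\<close>) to every column of the matrix, i.e. it lies in the
  left kernel. So the columns span a proper subspace, and every square matrix built from
  them is singular.\<close>

definition trace :: "'a :: comm_monoid_add mat \<Rightarrow> 'a" where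
  "trace A = (\<Sum>i<dim_row A. A $$ (i, i))"

definition diag_vec :: "'a mat \<Rightarrow> 'a vec" where
  "diag_vec A = vec (dim_row A) (\<lambda>i. A $$ (i, i))"

lemma diag_vec_carrier: "A \<in> carrier_mat n m \<Longrightarrow> diag_vec A \<in> carrier_vec n"
  by (simp add: diag_vec_def)

lemma trace_mult_comm:
  fixes A :: "'a :: comm_semiring_0 mat"
  assumes "A \<in> carrier_mat n m" and "B \<in> carrier_mat m n"
  shows "trace (A * B) = trace (B * A)"
proof -
  have "trace (A * B) = (\<Sum>i<n. \<Sum>l<m. A $$ (i, l) * B $$ (l, i))"
    unfolding trace_def using assms
    by (auto simp: scalar_prod_def lessThan_atLeast0 intro!: sum.cong)
  also have "\<dots> = (\<Sum>l<m. \<Sum>i<n. B $$ (l, i) * A $$ (i, l))"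
    by (subst sum.swap) (simp add: mult.commute)
  also have "\<dots> = trace (B * A)"
    unfolding trace_def using assms
    by (auto simp: scalar_prod_def lessThan_atLeast0 intro!: sum.cong)
  finally show ?thesis .
qed

lemma trace_minus:
  fixes A :: "'a :: ab_group_add mat"
  assumes "A \<in> carrier_mat n n" and "B \<in> carrier_mat n n"
  shows "trace (A - B) = trace A - trace B"
  unfolding trace_def using assms by (simp add: sum_subtractf)

lemma trace_commutator:
  fixes A :: "'a :: comm_ring mat"
  assumes "A \<in> carrier_mat n n" and "B \<in> carrier_mat n n"
  shows "trace (A * B - B * A) = 0"
proof -
  have "trace (A * B - B * A) = trace (A * B) - trace (B * A)"
    using assms by (intro trace_minus) auto
  then show ?thesis using trace_mult_comm[OF assms] by simp
qed

lemma trace_commutator_mult: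
  fixes A :: "'a :: comm_ring mat"
  assumes A: "A \<in> carrier_mat n n" and B: "B \<in> carrier_mat n n" and P: "P \<in> carrier_mat n n"
    and commutes: "A * P = P * A \<or> B * P = P * B"
  shows "trace ((A * B - B * A) * P) = 0"
proof -
  have expand: "(A * B - B * A) * P = A * (B * P) - B * (A * P)"
    using A B P by (simp add: minus_mult_distrib_mat[of _ n n])
  from commutes show ?thesis
  proof
    assume "A * P = P * A"
    then have "(A * B - B * A) * P = A * (B * P) - (B * P) * A"
      unfolding expand assoc_mult_mat[OF B P A] by (rule arg_cong)
    then show ?thesis
      by (metis trace_commutator A B P mult_carrier_mat)
  next
    assume "B * P = P * B"
    then have "(A * B - B * A) * P = (A * P) * B - B * (A * P)"
      unfolding expand assoc_mult_mat[OF A P B] by (rule arg_cong)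
    then show ?thesis
      by (metis trace_commutator A B P mult_carrier_mat)
  qed
qed

lemma trace_diagonal_mult:
  assumes D: "D \<in> carrier_mat n n" "diagonal_mat D" and P: "P \<in> carrier_mat n n"
  shows "trace (D * P) = diag_vec D \<bullet> diag_vec P"
proof -
  have "(D * P) $$ (i, i) = D $$ (i, i) * P $$ (i, i)" if "i < n" for i
  proof -
    have "(D * P) $$ (i, i) = (\<Sum>l\<in>{0..<n}. D $$ (i, l) * P $$ (l, i))"
      using D P that by (simp add: scalar_prod_def)
    also have "\<dots> = D $$ (i, i) * P $$ (i, i)"
      using D that by (subst sum.remove[of _ i]) (auto simp: diagonal_mat_def intro!: sum.neutral)
    finally show ?thesis .
  qed
  then show ?thesis
    using D P by (simp add: trace_def diag_vec_def scalar_prod_def lessThan_atLeast0)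
qed

lemma diag_vec_eq_0_iff:
  assumes D: "D \<in> carrier_mat n n" and "diagonal_mat D"
  shows "diag_vec D = 0\<^sub>v n \<longleftrightarrow> D = 0\<^sub>m n n"
proof
  assume "diag_vec D = 0\<^sub>v n"
  then have "D $$ (i, i) = 0" if "i < n" for i
    using D that unfolding diag_vec_def by (metis carrier_matD(1) index_vec index_zero_vec(1))
  with assms show "D = 0\<^sub>m n n"
    unfolding diagonal_mat_def by (intro eq_matI) auto
qed (simp add: diag_vec_def vec_eq_iff)

lemma pow_mat_commute:
  assumes "A \<in> carrier_mat n n"
  shows "A * A ^\<^sub>m k = A ^\<^sub>m k * A"
proof (induction k)
  case 0
  then show ?case using assms by simp
next
  case (Suc k)
  then have "A * A ^\<^sub>m Suc k = A ^\<^sub>m k * A * A"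
    using assms by (simp add: assoc_mult_mat[of _ n n _ n _ n, symmetric])
  then show ?case by simp
qed

lemma det_eq_0_if_cols_orthogonal:
  fixes A :: "'a :: field mat"
  assumes A: "A \<in> carrier_mat n n" and v: "v \<in> carrier_vec n" "v \<noteq> 0\<^sub>v n"
    and orthogonal: "\<forall>w \<in> set (cols A). w \<bullet> v = 0"
  shows "det A = 0"
proof -
  have "transpose_mat A *\<^sub>v v = 0\<^sub>v n"
    using A orthogonal by (intro eq_vecI) (auto simp: cols_def)
  then have "det (transpose_mat A) = 0"
    using det_0_iff_vec_prod_zero_field[of "transpose_mat A" n] A v by auto
  then show ?thesis
    using det_transpose[OF A] by simp
qed

lemma (in vec_space) nonsingular_of_cols_if_rank_ge:
  assumes A: "A \<in> carrier_mat n nc" and rank: "n \<le> rank A"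
  obtains B where "B \<in> carrier_mat n n" "set (cols B) \<subseteq> set (cols A)" "det B \<noteq> 0"
proof -
  let ?indpt_cols = "\<lambda>T. T \<subseteq> set (cols A) \<and> lin_indpt T"
  have "lin_indpt {}"
    unfolding lin_dep_def by blast
  then have "\<exists>S. finite S \<and> maximal S ?indpt_cols \<and> {} \<subseteq> S"
    by (intro maximal_exists_superset[of "set (cols A)"]) simp_all
  then obtain S where S: "maximal S ?indpt_cols"
    by blast
  then have S_cols: "S \<subseteq> set (cols A)" and S_indpt: "lin_indpt S"
    unfolding maximal_def by blast+
  have "n \<le> card S"
    using rank rank_card_indpt[OF A S] by simp
  then obtain T where T: "T \<subseteq> S" "card T = n" "finite T"
    by (rule obtain_subset_with_card_n)
  obtain ys where ys: "set ys = T" "distinct ys"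
    using finite_distinct_list[OF T(3)] by blast
  have ys_carrier: "set ys \<subseteq> carrier_vec n"
    using ys(1) T(1) S_cols cols_dim[of A] A by blast
  define B where "B = mat_of_cols n ys"
  have B: "B \<in> carrier_mat n n"
    using mat_of_cols_carrier(1)[of n ys] distinct_card[OF ys(2)] ys(1) T(2) unfolding B_def by simp
  have cols_B: "cols B = ys"
    unfolding B_def using ys_carrier by simp
  have "lin_indpt (set ys)"
    using subset_li_is_li[OF S_indpt] ys(1) T(1) by blast
  then have "rank B = n"
    using lin_indpt_full_rank[OF B] cols_B ys(2) by simp
  then have "det B \<noteq> 0"
    using det_rank_iff[OF B] by simp
  moreover have "set (cols B) \<subseteq> set (cols A)"
    using cols_B ys(1) T(1) S_cols by blast
  ultimately show thesis
    using that B by blast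
qed

lemma (in vec_space) rank_less_if_cols_orthogonal:
  assumes A: "A \<in> carrier_mat n nc" and v: "v \<in> carrier_vec n" "v \<noteq> 0\<^sub>v n"
    and orthogonal: "\<forall>w \<in> set (cols A). w \<bullet> v = 0"
  shows "rank A < n"
proof (rule ccontr)
  assume "\<not> rank A < n"
  then have "n \<le> rank A" by simp
  then obtain B where B: "B \<in> carrier_mat n n" "set (cols B) \<subseteq> set (cols A)" "det B \<noteq> 0"
    by (rule nonsingular_of_cols_if_rank_ge[OF A])
  have "det B = 0"
    by (rule det_eq_0_if_cols_orthogonal[OF B(1) v]) (use B(2) orthogonal in blast)
  with B(3) show False by simp
qed

lemma pick_atLeastLessThan: "i < n \<Longrightarrow> pick {0..<n} i = i"
  using pick_reduce_set[of i n UNIV] by (simp add: pick_UNIV atLeast0LessThan lessThan_def)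

lemma submatrix_all_rows:
  assumes A: "A \<in> carrier_mat n m" and J: "J \<subseteq> {0..<m}"
  shows "submatrix A {0..<n} J \<in> carrier_mat n (card J)"
    and "set (cols (submatrix A {0..<n} J)) \<subseteq> set (cols A)"
proof -
  let ?S = "submatrix A {0..<n} J"
  have rows: "{i. i < dim_row A \<and> i \<in> {0..<n}} = {0..<n}"
    using A by auto
  have cols: "{j. j < dim_col A \<and> j \<in> J} = J"
    using A J by auto
  show S: "?S \<in> carrier_mat n (card J)"
    by (rule carrier_matI) (unfold dim_submatrix rows cols, simp_all)
  have pick_less: "pick J j < m" if "j < card J" for j
    using pick_le[of j m J] that cols A by simp
  have col_S: "col ?S j = col A (pick J j)" if j: "j < card J" for j
  proof (rule eq_vecI)
    fix i assume "i < dim_vec (col A (pick J j))"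
    then have i: "i < n"
      using A by simp
    have "col ?S j $ i = ?S $$ (i, j)"
      using S i j by simp
    also have "\<dots> = A $$ (pick {0..<n} i, pick J j)"
      by (rule submatrix_index) (unfold rows cols, simp_all add: i j)
    also have "\<dots> = col A (pick J j) $ i"
      using A i pick_less[OF j] by (simp add: pick_atLeastLessThan)
    finally show "col ?S j $ i = col A (pick J j) $ i" .
  qed (use S A in simp)
  show "set (cols ?S) \<subseteq> set (cols A)"
  proof
    fix w assume "w \<in> set (cols ?S)"
    then obtain j where j: "j < card J" and w: "w = col ?S j"
      using S by (auto simp: cols_def)
    show "w \<in> set (cols A)"
      using A pick_less[OF j] unfolding w col_S[OF j] by (simp add: cols_def)
  qed
qed

lemma col_diag_powers_mat:
  assumes "X \<in> carrier_mat n n" and "Y \<in> carrier_mat n n" and "j < 2 * n"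
  shows "col (diag_powers_mat n X Y) j = diag_vec (if j < n then X ^\<^sub>m j else Y ^\<^sub>m (j - n))"
  using assms by (auto simp: diag_powers_mat_def diag_vec_def)

lemma diag_powers_mat_carrier: "diag_powers_mat n X Y \<in> carrier_mat n (2 * n)"
  by (simp add: diag_powers_mat_def)

lemma cols_diag_powers_mat_orthogonal_commutator:
  assumes X: "X \<in> carrier_mat n n" and Y: "Y \<in> carrier_mat n n"
    and diagonal: "diagonal_mat (X * Y - Y * X)"
  shows "\<forall>w \<in> set (cols (diag_powers_mat n X Y)). w \<bullet> diag_vec (X * Y - Y * X) = 0"
proof
  fix w assume "w \<in> set (cols (diag_powers_mat n X Y))"
  then obtain j where j: "j < 2 * n" and w: "w = col (diag_powers_mat n X Y) j"
    using diag_powers_mat_carrier[of n X Y] by (auto simp: cols_def)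
  define P where "P = (if j < n then X ^\<^sub>m j else Y ^\<^sub>m (j - n))"
  have P: "P \<in> carrier_mat n n"
    unfolding P_def using X Y by simp
  have commutes: "X * P = P * X \<or> Y * P = P * Y"
    unfolding P_def using pow_mat_commute[OF X] pow_mat_commute[OF Y] by simp
  have D: "X * Y - Y * X \<in> carrier_mat n n"
    using X Y by (simp add: minus_carrier_mat)
  have "w = diag_vec P"
    using col_diag_powers_mat[OF X Y j] unfolding w P_def .
  then have "w \<bullet> diag_vec (X * Y - Y * X) = diag_vec (X * Y - Y * X) \<bullet> diag_vec P"
    using comm_scalar_prod diag_vec_carrier[OF D] diag_vec_carrier[OF P] by metis
  also have "\<dots> = trace ((X * Y - Y * X) * P)"
    using trace_diagonal_mult[OF D diagonal P] by simp
  also have "\<dots> = 0"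
    using trace_commutator_mult[OF X Y P commutes] .
  finally show "w \<bullet> diag_vec (X * Y - Y * X) = 0" .
qed

theorem mainTheorem11:
  fixes n :: nat and X Y :: "complex mat"
  assumes "X \<in> carrier_mat n n" and "Y \<in> carrier_mat n n"
    and "diagonal_mat (X * Y - Y * X)"
    and "X * Y - Y * X \<noteq> 0\<^sub>m n n"
  shows "vec_space.rank n (diag_powers_mat n X Y) \<le> n - 1
    \<and> (\<forall>J. J \<subseteq> {0..<2 * n} \<longrightarrow> card J = n \<longrightarrow>
          det (submatrix (diag_powers_mat n X Y) {0..<n} J) = 0)"
proof -
  interpret vec_space "TYPE(complex)" n .
  define M where "M = diag_powers_mat n X Y"
  define d where "d = diag_vec (X * Y - Y * X)"
  have M: "M \<in> carrier_mat n (2 * n)"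
    unfolding M_def by (rule diag_powers_mat_carrier)
  have D: "X * Y - Y * X \<in> carrier_mat n n"
    using assms by (simp add: minus_carrier_mat)
  have d: "d \<in> carrier_vec n" "d \<noteq> 0\<^sub>v n"
    using diag_vec_carrier[OF D] diag_vec_eq_0_iff[OF D assms(3)] assms(4) unfolding d_def by auto
  have orthogonal: "\<forall>w \<in> set (cols M). w \<bullet> d = 0"
    unfolding M_def d_def using cols_diag_powers_mat_orthogonal_commutator assms by blast
  have "rank M < n"
    by (rule rank_less_if_cols_orthogonal[OF M d orthogonal])
  moreover have "det (submatrix M {0..<n} J) = 0" if J: "J \<subseteq> {0..<2 * n}" "card J = n" for J
    using det_eq_0_if_cols_orthogonal[OF _ d] submatrix_all_rows[OF M J(1)] J(2) orthogonal by auto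
  ultimately show ?thesis
    unfolding M_def by auto
qed

end
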